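(* Let $X=\bigsqcup_{\lambda\in\Lambda}G_\lambda$ be an MCQ, $R$ a ring, $M$ a left $R$-module, and let $(f_1,f_2,f_3,f_4;\phi_1,\phi_2)$ be a 6-tuple of maps ($f_1,f_2:X\times X\to R$, $f_3,f_4:\bigsqcup_\lambda(G_\lambda\times G_\lambda)\to R$, $\phi_1:X\times X\to M$, $\phi_2:\bigsqcup_\lambda(G_\lambda\times G_\lambda)\to M$) satisfying conditions (0-i)–(4-$\phi$). Define $g_1,g_2:X\times X\to R$, $\psi_1:X\times X\to M$, $\psi_2:\bigsqcup_\lambda(G_\lambda\times G_\lambda)\to M$ by $g_1(x,y)=f_1(e_x,y)$, $g_2(x,y)=f_3(x\triangleleft y,\,x^{-1}\triangleleft y)\,f_2(x,y)\,f_3(e_y,y)$, $\psi_1(x,y)=f_3(x\triangleleft y,\,x^{-1}\triangleleft y)\,\phi_1(x,y)$, $\psi_2(a,b)=f_3(ab,\,b^{-1}a^{-1})\,\phi_2(a,b)$. Then $(g_1,g_2;\psi_1,\psi_2)$ is an augmented MCQ Alexander pair.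
   Context: A multiple conjugation quandle (MCQ) is a set $X=\bigsqcup_{\lambda\in\Lambda}G_\lambda$ that is a disjoint union of groups $G_\lambda$, together with a binary operation $\triangleleft:X\times X\to X$ such that: (i) for all $a,b\in G_\lambda$, $a\triangleleft b=b^{-1}ab$; (ii) for all $x\in X$ and $a,b\in G_\lambda$, $x\triangleleft e_\lambda=x$ and $x\triangleleft(ab)=(x\triangleleft a)\triangleleft b$, where $e_\lambda$ is the identity of $G_\lambda$; (iii) for all $x,y,z\in X$, $(x\triangleleft y)\triangleleft z=(x\triangleleft z)\triangleleft(y\triangleleft z)$; (iv) for all $x\in X$ and $a,b\in G_\lambda$, the elements $a\triangleleft x$ and $b\triangleleft x$ lie in a common group $G_\mu$ and $(ab)\triangleleft x=(a\triangleleft x)(b\triangleleft x)$. For $x\in X$, $G_x$ denotes the group containing $x$, $e_x$ its identity, $x^{-1}$ the inverse of $x$ in $G_x$. $\bigsqcup_{\lambda}(G_\lambda\times G_\lambda)$ is the set of pairs of elements lying in a common group $G_\lambda$. Rings have a multiplicative identity $1\neq0$ and need not be commutative. Conditions (0-i)–(4-$\phi$) on a 6-tuple $(f_1,f_2,f_3,f_4;\phi_1,\phi_2)$: For all $\lambda$ and $a,b,c\in G_\lambda$: (0-i) $f_3(a,b)$, $f_4(a,b)$ invertible; (0-ii) $f_3(ab,c)f_3(a,b)=f_3(a,bc)$; (0-iii) $f_3(ab,c)f_4(a,b)=f_4(a,bc)f_3(b,c)$; (0-iv) $f_4(ab,c)=f_4(a,bc)f_4(b,c)$; (0-$\phi$)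 $f_3(ab,c)\phi_2(a,b)+\phi_2(ab,c)=f_4(a,bc)\phi_2(b,c)+\phi_2(a,bc)$. For all $a,b\in G_\lambda$: (1-i) $f_1(a,b)=f_4(b^{-1},ab)f_3(a,b)$; (1-ii) $f_3(b,b^{-1}ab)+f_4(b,b^{-1}ab)f_2(a,b)=f_4(a,b)$; (1-$\phi$) $f_4(b,b^{-1}ab)\phi_1(a,b)+\phi_2(b,b^{-1}ab)=\phi_2(a,b)$. For all $x\in X$, $a,b\in G_\lambda$: (2-i) $f_1(x,e_\lambda)=1$; (2-ii) $f_1(x,ab)=f_1(x\triangleleft a,b)f_1(x,a)$; (2-iii) $f_2(x,ab)f_3(a,b)=f_1(x\triangleleft a,b)f_2(x,a)$; (2-iv) $f_2(x,ab)f_4(a,b)=f_2(x\triangleleft a,b)$; (2-$\phi$i) $f_2(x,e_\lambda)\phi_2(e_\lambda,e_\lambda)=\phi_1(x,e_\lambda)$; (2-$\phi$ii) $f_2(x,ab)\phi_2(a,b)+\phi_1(x,ab)=f_1(x\triangleleft a,b)\phi_1(x,a)+\phi_1(x\triangleleft a,b)$. For all $x,y,z\in X$: (3-i) $f_1(x\triangleleft y,z)f_1(x,y)=f_1(x\triangleleft z,y\triangleleft z)f_1(x,z)$; (3-ii) $f_1(x\triangleleft y,z)f_2(x,y)=f_2(x\triangleleft z,y\triangleleft z)f_1(y,z)$; (3-iii) $f_2(x\triangleleft y,z)=f_1(x\triangleleft z,y\triangleleft z)f_2(x,z)+f_2(x\triangleleft z,y\triangleleft z)f_2(y,z)$; (3-$\phi$)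 $f_1(x\triangleleft y,z)\phi_1(x,y)+\phi_1(x\triangleleft y,z)=f_1(x\triangleleft z,y\triangleleft z)\phi_1(x,z)+f_2(x\triangleleft z,y\triangleleft z)\phi_1(y,z)+\phi_1(x\triangleleft z,y\triangleleft z)$. For all $a,b\in G_\lambda$, $x\in X$: (4-i) $f_1(ab,x)f_3(a,b)=f_3(a\triangleleft x,b\triangleleft x)f_1(a,x)$; (4-ii) $f_1(ab,x)f_4(a,b)=f_4(a\triangleleft x,b\triangleleft x)f_1(b,x)$; (4-iii) $f_2(ab,x)=f_3(a\triangleleft x,b\triangleleft x)f_2(a,x)+f_4(a\triangleleft x,b\triangleleft x)f_2(b,x)$; (4-$\phi$) $f_1(ab,x)\phi_2(a,b)+\phi_1(ab,x)=f_3(a\triangleleft x,b\triangleleft x)\phi_1(a,x)+f_4(a\triangleleft x,b\triangleleft x)\phi_1(b,x)+\phi_2(a\triangleleft x,b\triangleleft x)$. An MCQ Alexander pair is a pair of maps $g_1,g_2:X\times X\to R$ such that: (A1) for all $a,b\in G_\lambda$: $g_1(a,b)+g_2(a,b)=g_1(a,a^{-1}b)$; (A2) for all $a,b\in G_\lambda$, $x\in X$: $g_1(a,x)=g_1(b,x)$ and $g_2(ab,x)=g_2(a,x)+g_1(b\triangleleft x,a^{-1}\triangleleft x)g_2(b,x)$; (A3) for all $x\in X$, $a,b\in G_\lambda$: $g_1(x,e_\lambda)=1$, $g_1(x,ab)=g_1(x\triangleleft a,b)g_1(x,a)$, $g_2(x,ab)=g_1(x\triangleleft a,b)g_2(x,a)$;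 (A4) for all $x,y,z\in X$: $g_1(x\triangleleft y,z)g_1(x,y)=g_1(x\triangleleft z,y\triangleleft z)g_1(x,z)$; $g_1(x\triangleleft y,z)g_2(x,y)=g_2(x\triangleleft z,y\triangleleft z)g_1(y,z)$; $g_2(x\triangleleft y,z)=g_1(x\triangleleft z,y\triangleleft z)g_2(x,z)+g_2(x\triangleleft z,y\triangleleft z)g_2(y,z)$. For an MCQ Alexander pair $(g_1,g_2)$, a $(g_1,g_2)$-twisted 2-cocycle is a pair $\psi_1:X\times X\to M$, $\psi_2:\bigsqcup_\lambda(G_\lambda\times G_\lambda)\to M$ with: (T1) for $a,b,c\in G_\lambda$: $\psi_2(a,b)+\psi_2(ab,c)=g_1(a,a^{-1})\psi_2(b,c)+\psi_2(a,bc)$; (T2) for $a,b\in G_\lambda$: $g_1(b,b^{-1})\psi_1(a,b)+\psi_2(b,b^{-1}ab)=\psi_2(a,b)$; (T3) for $x\in X$, $a,b\in G_\lambda$: $g_2(x,ab)\psi_2(a,b)+\psi_1(x,ab)=g_1(x\triangleleft a,b)\psi_1(x,a)+\psi_1(x\triangleleft a,b)$; (T4) for $x,y,z\in X$: $g_1(x\triangleleft y,z)\psi_1(x,y)+\psi_1(x\triangleleft y,z)=g_1(x\triangleleft z,y\triangleleft z)\psi_1(x,z)+g_2(x\triangleleft z,y\triangleleft z)\psi_1(y,z)+\psi_1(x\triangleleft z,y\triangleleft z)$; (T5) for $a,b\in G_\lambda$, $x\in X$: $g_1(ab,x)\psi_2(a,b)+\psi_1(ab,x)=\psi_1(a,x)+g_1(a\triangleleft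 x,a^{-1}\triangleleft x)\psi_1(b,x)+\psi_2(a\triangleleft x,b\triangleleft x)$. $(g_1,g_2;\psi_1,\psi_2)$ is an augmented MCQ Alexander pair if $(g_1,g_2)$ is an MCQ Alexander pair and $(\psi_1,\psi_2)$ is a $(g_1,g_2)$-twisted 2-cocycle. *)

theory Defs
  imports Main
begin

text \<open>An MCQ X = disjoint union of groups G_lambda is encoded on a type 'x by:
  idx : 'x => 'l   (x lies in the group G_(idx x); Lambda = range idx),
  mul              (group multiplication, meaningful on pairs in a common group),
  e                (e x = identity of the group containing x),
  iv               (iv x = inverse of x in its group),
  tr               (the quandle operation, tr x y = x triangleleft y).
Maps defined on the disjoint union of G_lambda x G_lambda are encoded as
functions 'x => 'x => _ whose values are only used on pairs in a common group.\<close>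

definition mcq :: "('x \<Rightarrow> 'l) \<Rightarrow> ('x \<Rightarrow> 'x \<Rightarrow> 'x) \<Rightarrow> ('x \<Rightarrow> 'x) \<Rightarrow> ('x \<Rightarrow> 'x)
                    \<Rightarrow> ('x \<Rightarrow> 'x \<Rightarrow> 'x) \<Rightarrow> bool" where
  "mcq idx mul e iv tr \<longleftrightarrow>
     \<comment> \<open>each fibre of idx is a group\<close>
     (\<forall>a b. idx a = idx b \<longrightarrow> idx (mul a b) = idx a) \<and>
     (\<forall>a b c. idx a = idx b \<and> idx b = idx c \<longrightarrow> mul (mul a b) c = mul a (mul b c)) \<and>
     (\<forall>a. idx (e a) = idx a) \<and>
     (\<forall>a b. idx a = idx b \<longrightarrow> e a = e b) \<and>
     (\<forall>a. mul (e a) a = a \<and> mul a (e a) = a) \<and>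
     (\<forall>a. idx (iv a) = idx a \<and> mul a (iv a) = e a \<and> mul (iv a) a = e a) \<and>
     \<comment> \<open>(i)\<close>
     (\<forall>a b. idx a = idx b \<longrightarrow> tr a b = mul (mul (iv b) a) b) \<and>
     \<comment> \<open>(ii)\<close>
     (\<forall>x a. tr x (e a) = x) \<and>
     (\<forall>x a b. idx a = idx b \<longrightarrow> tr x (mul a b) = tr (tr x a) b) \<and>
     \<comment> \<open>(iii)\<close>
     (\<forall>x y z. tr (tr x y) z = tr (tr x z) (tr y z)) \<and>
     \<comment> \<open>(iv)\<close>
     (\<forall>x a b. idx a = idx b \<longrightarrow>
        idx (tr a x) = idx (tr b x) \<and> tr (mul a b) x = mul (tr a x) (tr b x))"

definition left_module :: "('r::ring_1 \<Rightarrow> 'm::ab_group_add \<Rightarrow> 'm) \<Rightarrow> bool" where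
  "left_module smul \<longleftrightarrow>
     (\<forall>r m n. smul r (m + n) = smul r m + smul r n) \<and>
     (\<forall>r s m. smul (r + s) m = smul r m + smul s m) \<and>
     (\<forall>r s m. smul (r * s) m = smul r (smul s m)) \<and>
     (\<forall>m. smul 1 m = m)"

definition invertible_elt :: "'r::ring_1 \<Rightarrow> bool" where
  "invertible_elt r \<longleftrightarrow> (\<exists>u. u * r = 1 \<and> r * u = 1)"

definition six_tuple_conditions ::
  "('x \<Rightarrow> 'l) \<Rightarrow> ('x \<Rightarrow> 'x \<Rightarrow> 'x) \<Rightarrow> ('x \<Rightarrow> 'x) \<Rightarrow> ('x \<Rightarrow> 'x) \<Rightarrow> ('x \<Rightarrow> 'x \<Rightarrow> 'x)
   \<Rightarrow> ('r::ring_1 \<Rightarrow> 'm::ab_group_add \<Rightarrow> 'm)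
   \<Rightarrow> ('x \<Rightarrow> 'x \<Rightarrow> 'r) \<Rightarrow> ('x \<Rightarrow> 'x \<Rightarrow> 'r) \<Rightarrow> ('x \<Rightarrow> 'x \<Rightarrow> 'r) \<Rightarrow> ('x \<Rightarrow> 'x \<Rightarrow> 'r)
   \<Rightarrow> ('x \<Rightarrow> 'x \<Rightarrow> 'm) \<Rightarrow> ('x \<Rightarrow> 'x \<Rightarrow> 'm) \<Rightarrow> bool" where
  "six_tuple_conditions idx mul e iv tr smul f1 f2 f3 f4 \<phi>1 \<phi>2 \<longleftrightarrow>
     \<comment> \<open>(0-i) -- (0-phi)\<close>
     (\<forall>a b. idx a = idx b \<longrightarrow> invertible_elt (f3 a b) \<and> invertible_elt (f4 a b)) \<and>
     (\<forall>a b c. idx a = idx b \<and> idx b = idx c \<longrightarrow>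
        f3 (mul a b) c * f3 a b = f3 a (mul b c) \<and>
        f3 (mul a b) c * f4 a b = f4 a (mul b c) * f3 b c \<and>
        f4 (mul a b) c = f4 a (mul b c) * f4 b c \<and>
        smul (f3 (mul a b) c) (\<phi>2 a b) + \<phi>2 (mul a b) c
          = smul (f4 a (mul b c)) (\<phi>2 b c) + \<phi>2 a (mul b c)) \<and>
     \<comment> \<open>(1-i) -- (1-phi)\<close>
     (\<forall>a b. idx a = idx b \<longrightarrow>
        f1 a b = f4 (iv b) (mul a b) * f3 a b \<and>
        f3 b (mul (mul (iv b) a) b) + f4 b (mul (mul (iv b) a) b) * f2 a b = f4 a b \<and>
        smul (f4 b (mul (mul (iv b) a) b)) (\<phi>1 a b) + \<phi>2 b (mul (mul (iv b) a) b) = \<phi>2 a b) \<and>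
     \<comment> \<open>(2-i) -- (2-phi ii)\<close>
     (\<forall>x a. f1 x (e a) = 1) \<and>
     (\<forall>x a b. idx a = idx b \<longrightarrow>
        f1 x (mul a b) = f1 (tr x a) b * f1 x a \<and>
        f2 x (mul a b) * f3 a b = f1 (tr x a) b * f2 x a \<and>
        f2 x (mul a b) * f4 a b = f2 (tr x a) b \<and>
        smul (f2 x (mul a b)) (\<phi>2 a b) + \<phi>1 x (mul a b)
          = smul (f1 (tr x a) b) (\<phi>1 x a) + \<phi>1 (tr x a) b) \<and>
     (\<forall>x a. smul (f2 x (e a)) (\<phi>2 (e a) (e a)) = \<phi>1 x (e a)) \<and>
     \<comment> \<open>(3-i) -- (3-phi)\<close>
     (\<forall>x y z.
        f1 (tr x y) z * f1 x y = f1 (tr x z) (tr y z) * f1 x z \<and>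
        f1 (tr x y) z * f2 x y = f2 (tr x z) (tr y z) * f1 y z \<and>
        f2 (tr x y) z = f1 (tr x z) (tr y z) * f2 x z + f2 (tr x z) (tr y z) * f2 y z \<and>
        smul (f1 (tr x y) z) (\<phi>1 x y) + \<phi>1 (tr x y) z
          = smul (f1 (tr x z) (tr y z)) (\<phi>1 x z) + smul (f2 (tr x z) (tr y z)) (\<phi>1 y z)
            + \<phi>1 (tr x z) (tr y z)) \<and>
     \<comment> \<open>(4-i) -- (4-phi)\<close>
     (\<forall>a b x. idx a = idx b \<longrightarrow>
        f1 (mul a b) x * f3 a b = f3 (tr a x) (tr b x) * f1 a x \<and>
        f1 (mul a b) x * f4 a b = f4 (tr a x) (tr b x) * f1 b x \<and>
        f2 (mul a b) x = f3 (tr a x) (tr b x) * f2 a x + f4 (tr a x) (tr b x) * f2 b x \<and>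
        smul (f1 (mul a b) x) (\<phi>2 a b) + \<phi>1 (mul a b) x
          = smul (f3 (tr a x) (tr b x)) (\<phi>1 a x) + smul (f4 (tr a x) (tr b x)) (\<phi>1 b x)
            + \<phi>2 (tr a x) (tr b x))"

definition mcq_alexander_pair ::
  "('x \<Rightarrow> 'l) \<Rightarrow> ('x \<Rightarrow> 'x \<Rightarrow> 'x) \<Rightarrow> ('x \<Rightarrow> 'x) \<Rightarrow> ('x \<Rightarrow> 'x) \<Rightarrow> ('x \<Rightarrow> 'x \<Rightarrow> 'x)
   \<Rightarrow> ('x \<Rightarrow> 'x \<Rightarrow> 'r::ring_1) \<Rightarrow> ('x \<Rightarrow> 'x \<Rightarrow> 'r) \<Rightarrow> bool" where
  "mcq_alexander_pair idx mul e iv tr g1 g2 \<longleftrightarrow>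
     \<comment> \<open>(A1)\<close>
     (\<forall>a b. idx a = idx b \<longrightarrow> g1 a b + g2 a b = g1 a (mul (iv a) b)) \<and>
     \<comment> \<open>(A2)\<close>
     (\<forall>a b x. idx a = idx b \<longrightarrow>
        g1 a x = g1 b x \<and>
        g2 (mul a b) x = g2 a x + g1 (tr b x) (tr (iv a) x) * g2 b x) \<and>
     \<comment> \<open>(A3)\<close>
     (\<forall>x a. g1 x (e a) = 1) \<and>
     (\<forall>x a b. idx a = idx b \<longrightarrow>
        g1 x (mul a b) = g1 (tr x a) b * g1 x a \<and>
        g2 x (mul a b) = g1 (tr x a) b * g2 x a) \<and>
     \<comment> \<open>(A4)\<close>
     (\<forall>x y z.
        g1 (tr x y) z * g1 x y = g1 (tr x z) (tr y z) * g1 x z \<and>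
        g1 (tr x y) z * g2 x y = g2 (tr x z) (tr y z) * g1 y z \<and>
        g2 (tr x y) z = g1 (tr x z) (tr y z) * g2 x z + g2 (tr x z) (tr y z) * g2 y z)"

definition twisted_2_cocycle ::
  "('x \<Rightarrow> 'l) \<Rightarrow> ('x \<Rightarrow> 'x \<Rightarrow> 'x) \<Rightarrow> ('x \<Rightarrow> 'x) \<Rightarrow> ('x \<Rightarrow> 'x) \<Rightarrow> ('x \<Rightarrow> 'x \<Rightarrow> 'x)
   \<Rightarrow> ('r::ring_1 \<Rightarrow> 'm::ab_group_add \<Rightarrow> 'm)
   \<Rightarrow> ('x \<Rightarrow> 'x \<Rightarrow> 'r) \<Rightarrow> ('x \<Rightarrow> 'x \<Rightarrow> 'r) \<Rightarrow> ('x \<Rightarrow> 'x \<Rightarrow> 'm) \<Rightarrow> ('x \<Rightarrow> 'x \<Rightarrow> 'm) \<Rightarrow> bool" where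
  "twisted_2_cocycle idx mul e iv tr smul g1 g2 \<psi>1 \<psi>2 \<longleftrightarrow>
     \<comment> \<open>(T1)\<close>
     (\<forall>a b c. idx a = idx b \<and> idx b = idx c \<longrightarrow>
        \<psi>2 a b + \<psi>2 (mul a b) c = smul (g1 a (iv a)) (\<psi>2 b c) + \<psi>2 a (mul b c)) \<and>
     \<comment> \<open>(T2)\<close>
     (\<forall>a b. idx a = idx b \<longrightarrow>
        smul (g1 b (iv b)) (\<psi>1 a b) + \<psi>2 b (mul (mul (iv b) a) b) = \<psi>2 a b) \<and>
     \<comment> \<open>(T3)\<close>
     (\<forall>x a b. idx a = idx b \<longrightarrow>
        smul (g2 x (mul a b)) (\<psi>2 a b) + \<psi>1 x (mul a b)
          = smul (g1 (tr x a) b) (\<psi>1 x a) + \<psi>1 (tr x a) b) \<and>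
     \<comment> \<open>(T4)\<close>
     (\<forall>x y z.
        smul (g1 (tr x y) z) (\<psi>1 x y) + \<psi>1 (tr x y) z
          = smul (g1 (tr x z) (tr y z)) (\<psi>1 x z) + smul (g2 (tr x z) (tr y z)) (\<psi>1 y z)
            + \<psi>1 (tr x z) (tr y z)) \<and>
     \<comment> \<open>(T5)\<close>
     (\<forall>a b x. idx a = idx b \<longrightarrow>
        smul (g1 (mul a b) x) (\<psi>2 a b) + \<psi>1 (mul a b) x
          = \<psi>1 a x + smul (g1 (tr a x) (tr (iv a) x)) (\<psi>1 b x) + \<psi>2 (tr a x) (tr b x))"

definition augmented_mcq_alexander_pair where
  "augmented_mcq_alexander_pair idx mul e iv tr smul g1 g2 \<psi>1 \<psi>2 \<longleftrightarrow>
     mcq_alexander_pair idx mul e iv tr g1 g2 \<and>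
     twisted_2_cocycle idx mul e iv tr smul g1 g2 \<psi>1 \<psi>2"

end

theory Submission
  imports Defs
begin

text \<open>The units \<open>H(x) = f\<^sub>3(e\<^sub>x, x)\<close> act as a gauge: by (0-ii),
  \<open>f\<^sub>3(a,b) = H(ab) H(a)\<^sup>-\<^sup>1\<close>, so conjugating the 6-tuple by \<open>H\<close>
  (\<open>f\<^sub>1(x,y) \<mapsto> H(x\<triangleleft>y)\<^sup>-\<^sup>1 f\<^sub>1(x,y) H(x)\<close>, \<open>f\<^sub>4(a,b) \<mapsto> H(ab)\<^sup>-\<^sup>1 f\<^sub>4(a,b) H(b)\<close>, \<dots>)
  turns \<open>f\<^sub>3\<close> into \<open>1\<close>. Since \<open>f\<^sub>3(x\<triangleleft>y, x\<^sup>-\<^sup>1\<triangleleft>y) = H(x\<triangleleft>y)\<^sup>-\<^sup>1\<close>, the maps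
  \<open>g\<^sub>1, g\<^sub>2, \<psi>\<^sub>1, \<psi>\<^sub>2\<close> are exactly the conjugated \<open>f\<^sub>1, f\<^sub>2, \<phi>\<^sub>1, \<phi>\<^sub>2\<close>.
  With \<open>f\<^sub>3 = 1\<close>, condition (0-iii) says that the conjugated \<open>f\<^sub>4(a,b)\<close> depends only on
  \<open>a\<close>, and (0-iv) makes this \<open>\<kappa>(a)\<close> multiplicative on each group; (1-i) then gives
  \<open>g\<^sub>1(a,b) = \<kappa>(b\<^sup>-\<^sup>1)\<close>. With these facts each conjugated condition becomes one of
  the axioms (A1)--(T5).\<close>

definition unit_inv :: "'a::ring_1 \<Rightarrow> 'a" where
  "unit_inv u = (SOME v. v * u = 1 \<and> u * v = 1)"

lemma unit_inv [simp]:
  assumes "invertible_elt u"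
  shows unit_inv_left: "unit_inv u * u = 1" and unit_inv_right: "u * unit_inv u = 1"
proof -
  have "\<exists>v. v * u = 1 \<and> u * v = 1" using assms unfolding invertible_elt_def by blast
  then have "unit_inv u * u = 1 \<and> u * unit_inv u = 1" unfolding unit_inv_def by (rule someI_ex)
  then show "unit_inv u * u = 1" "u * unit_inv u = 1" by auto
qed

lemma unit_inv_cancel [simp]:
  assumes "invertible_elt u"
  shows "unit_inv u * (u * z) = z" "u * (unit_inv u * z) = z"
  using unit_inv[OF assms] by (simp_all add: mult.assoc[symmetric])

lemma invertible_elt_mult:
  assumes "invertible_elt u" "invertible_elt v"
  shows "invertible_elt (u * v)"
proof -
  have "(unit_inv v * unit_inv u) * (u * v) = 1" "(u * v) * (unit_inv v * unit_inv u) = 1"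
    using assms by (simp_all add: mult.assoc)
  then show ?thesis unfolding invertible_elt_def by blast
qed

lemma invertible_elt_unit_inv: "invertible_elt u \<Longrightarrow> invertible_elt (unit_inv u)"
  using unit_inv unfolding invertible_elt_def by blast

lemma invertible_idempotent_eq_1:
  assumes "invertible_elt u" "u * u = u"
  shows "u = 1"
proof -
  have "u = unit_inv u * (u * u)" using assms(1) by simp
  then show ?thesis using assms by simp
qed

locale multiple_conjugation_quandle =
  fixes idx :: "'x \<Rightarrow> 'l" and mul :: "'x \<Rightarrow> 'x \<Rightarrow> 'x" and e iv :: "'x \<Rightarrow> 'x"
    and tr :: "'x \<Rightarrow> 'x \<Rightarrow> 'x"
  assumes mcq: "mcq idx mul e iv tr"
begin

lemma idx_mul [simp]: "idx a = idx b \<Longrightarrow> idx (mul a b) = idx a"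
  using mcq unfolding mcq_def by metis

lemma mul_assoc: "idx a = idx b \<Longrightarrow> idx b = idx c \<Longrightarrow> mul (mul a b) c = mul a (mul b c)"
  using mcq unfolding mcq_def by metis

lemma idx_e [simp]: "idx (e a) = idx a"
  using mcq unfolding mcq_def by metis

lemma e_cong: "idx a = idx b \<Longrightarrow> e a = e b"
  using mcq unfolding mcq_def by metis

lemma mul_e_self [simp]: "mul (e a) a = a" "mul a (e a) = a"
  using mcq unfolding mcq_def by metis+

lemma idx_iv [simp]: "idx (iv a) = idx a"
  using mcq unfolding mcq_def by metis

lemma mul_iv_self [simp]: "mul a (iv a) = e a" "mul (iv a) a = e a"
  using mcq unfolding mcq_def by metis+

lemma tr_group: "idx a = idx b \<Longrightarrow> tr a b = mul (mul (iv b) a) b"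
  using mcq unfolding mcq_def by metis

lemma tr_e_right [simp]: "tr x (e a) = x"
  using mcq unfolding mcq_def by metis

lemma tr_mul_right: "idx a = idx b \<Longrightarrow> tr x (mul a b) = tr (tr x a) b"
  using mcq unfolding mcq_def by metis

lemma tr_self_distrib: "tr (tr x y) z = tr (tr x z) (tr y z)"
  using mcq unfolding mcq_def by metis

lemma idx_tr_cong: "idx a = idx b \<Longrightarrow> idx (tr a x) = idx (tr b x)"
  using mcq unfolding mcq_def by metis

lemma tr_mul_left: "idx a = idx b \<Longrightarrow> tr (mul a b) x = mul (tr a x) (tr b x)"
  using mcq unfolding mcq_def by metis

lemma e_mul [simp]: "idx a = idx b \<Longrightarrow> mul (e a) b = b"
  and mul_e [simp]: "idx a = idx b \<Longrightarrow> mul b (e a) = b"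
  using e_cong[of a b] by simp_all

lemma e_idem [simp]: "e (e a) = e a"
  and e_iv [simp]: "e (iv a) = e a"
  and e_mul_eq [simp]: "idx a = idx b \<Longrightarrow> e (mul a b) = e a"
  by (rule e_cong; simp)+

lemma mul_iv_cancel [simp]:
  assumes "idx b = idx z"
  shows "mul b (mul (iv b) z) = z" "mul (iv b) (mul b z) = z"
  using assms mul_assoc[of b "iv b" z] mul_assoc[of "iv b" b z] by simp_all

lemma iv_unique:
  assumes "idx a = idx b" "mul a b = e a"
  shows "b = iv a"
  using mul_iv_cancel(2)[of a b] assms by simp

lemma iv_iv [simp]: "iv (iv a) = a"
  using iv_unique[of "iv a" a] by simp

lemma iv_mul:
  assumes "idx a = idx b"
  shows "iv (mul a b) = mul (iv b) (iv a)"
proof -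
  have "mul (mul a b) (mul (iv b) (iv a)) = mul a (mul b (mul (iv b) (iv a)))"
    using assms by (intro mul_assoc) auto
  also have "\<dots> = e (mul a b)" using assms by simp
  finally show ?thesis using assms iv_unique[of "mul a b" "mul (iv b) (iv a)"] by simp
qed

lemma idempotent_eq_e:
  assumes "mul u u = u"
  shows "u = e u"
  using mul_iv_cancel(2)[of u u] assms by simp

lemma idx_tr_iv [simp]: "idx (tr (iv a) x) = idx (tr a x)"
  and idx_tr_e [simp]: "idx (tr (e a) x) = idx (tr a x)"
  by (rule idx_tr_cong, simp)+

lemma tr_e_left [simp]: "tr (e x) y = e (tr x y)"
proof -
  have "mul (tr (e x) y) (tr (e x) y) = tr (e x) y"
    using tr_mul_left[of "e x" "e x" y] by simp
  then have "tr (e x) y = e (tr (e x) y)" by (rule idempotent_eq_e)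
  then show ?thesis using e_cong[of "tr (e x) y" "tr x y"] by simp
qed

lemma tr_iv_left: "tr (iv x) y = iv (tr x y)"
proof -
  have "mul (tr x y) (tr (iv x) y) = e (tr x y)"
    using tr_mul_left[of x "iv x" y] by simp
  then show ?thesis using iv_unique[of "tr x y" "tr (iv x) y"] by simp
qed

end

locale six_tuple = multiple_conjugation_quandle idx mul e iv tr
  for idx :: "'x \<Rightarrow> 'l" and mul :: "'x \<Rightarrow> 'x \<Rightarrow> 'x" and e iv :: "'x \<Rightarrow> 'x"
    and tr :: "'x \<Rightarrow> 'x \<Rightarrow> 'x" +
  fixes smul :: "'r::ring_1 \<Rightarrow> 'm::ab_group_add \<Rightarrow> 'm"
    and f1 f2 f3 f4 :: "'x \<Rightarrow> 'x \<Rightarrow> 'r" and \<phi>1 \<phi>2 :: "'x \<Rightarrow> 'x \<Rightarrow> 'm"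
  assumes module: "left_module smul"
    and conditions: "six_tuple_conditions idx mul e iv tr smul f1 f2 f3 f4 \<phi>1 \<phi>2"
begin

lemma smul_add_right [simp]: "smul r (m + n) = smul r m + smul r n"
  and smul_mult [simp]: "smul (r * s) m = smul r (smul s m)"
  and smul_one [simp]: "smul 1 m = m"
  using module unfolding left_module_def by blast+

lemma smul_unit_inv_cancel [simp]:
  "invertible_elt u \<Longrightarrow> smul (unit_inv u) (smul u m) = m"
  "invertible_elt u \<Longrightarrow> smul u (smul (unit_inv u) m) = m"
  by (metis smul_mult smul_one unit_inv_left, metis smul_mult smul_one unit_inv_right)

lemma f3_invertible: "idx a = idx b \<Longrightarrow> invertible_elt (f3 a b)"
  and f4_invertible: "idx a = idx b \<Longrightarrow> invertible_elt (f4 a b)"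
  using conditions unfolding six_tuple_conditions_def by metis+

context
  fixes a b c assumes abc: "idx a = idx b" "idx b = idx c"
begin

lemma cond_0ii: "f3 (mul a b) c * f3 a b = f3 a (mul b c)"
  and cond_0iii: "f3 (mul a b) c * f4 a b = f4 a (mul b c) * f3 b c"
  and cond_0iv: "f4 (mul a b) c = f4 a (mul b c) * f4 b c"
  and cond_0phi: "smul (f3 (mul a b) c) (\<phi>2 a b) + \<phi>2 (mul a b) c
          = smul (f4 a (mul b c)) (\<phi>2 b c) + \<phi>2 a (mul b c)"
  using conditions abc unfolding six_tuple_conditions_def by metis+

end

context
  fixes a b assumes ab: "idx a = idx b"
begin

lemma cond_1i: "f1 a b = f4 (iv b) (mul a b) * f3 a b"
  and cond_1ii: "f3 b (mul (mul (iv b) a) b) + f4 b (mul (mul (iv b) a) b) * f2 a b = f4 a b"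
  and cond_1phi: "smul (f4 b (mul (mul (iv b) a) b)) (\<phi>1 a b) + \<phi>2 b (mul (mul (iv b) a) b)
          = \<phi>2 a b"
  using conditions ab unfolding six_tuple_conditions_def by metis+

lemma cond_2ii: "f1 x (mul a b) = f1 (tr x a) b * f1 x a"
  and cond_2iii: "f2 x (mul a b) * f3 a b = f1 (tr x a) b * f2 x a"
  and cond_2phi: "smul (f2 x (mul a b)) (\<phi>2 a b) + \<phi>1 x (mul a b)
          = smul (f1 (tr x a) b) (\<phi>1 x a) + \<phi>1 (tr x a) b"
  using conditions ab unfolding six_tuple_conditions_def by metis+

lemma cond_4i: "f1 (mul a b) x * f3 a b = f3 (tr a x) (tr b x) * f1 a x"
  and cond_4iii: "f2 (mul a b) x = f3 (tr a x) (tr b x) * f2 a x + f4 (tr a x) (tr b x) * f2 b x"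
  and cond_4phi: "smul (f1 (mul a b) x) (\<phi>2 a b) + \<phi>1 (mul a b) x
          = smul (f3 (tr a x) (tr b x)) (\<phi>1 a x) + smul (f4 (tr a x) (tr b x)) (\<phi>1 b x)
            + \<phi>2 (tr a x) (tr b x)"
  using conditions ab unfolding six_tuple_conditions_def by metis+

end

lemma cond_2i: "f1 x (e a) = 1"
  using conditions unfolding six_tuple_conditions_def by metis

lemma cond_3i: "f1 (tr x y) z * f1 x y = f1 (tr x z) (tr y z) * f1 x z"
  and cond_3ii: "f1 (tr x y) z * f2 x y = f2 (tr x z) (tr y z) * f1 y z"
  and cond_3iii: "f2 (tr x y) z = f1 (tr x z) (tr y z) * f2 x z + f2 (tr x z) (tr y z) * f2 y z"
  and cond_3phi: "smul (f1 (tr x y) z) (\<phi>1 x y) + \<phi>1 (tr x y) z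
          = smul (f1 (tr x z) (tr y z)) (\<phi>1 x z) + smul (f2 (tr x z) (tr y z)) (\<phi>1 y z)
            + \<phi>1 (tr x z) (tr y z)"
  using conditions unfolding six_tuple_conditions_def by metis+

definition gauge :: "'x \<Rightarrow> 'r" where
  "gauge x = f3 (e x) x"

lemma gauge_invertible [simp]: "invertible_elt (gauge x)"
  unfolding gauge_def by (rule f3_invertible) simp

lemma f3_e_right: "f3 a (e a) = 1"
proof -
  have "f3 a (e a) * f3 a (e a) = f3 a (e a)"
    using cond_0ii[of a "e a" "e a"] by simp
  then show ?thesis by (intro invertible_idempotent_eq_1 f3_invertible) simp_all
qed

lemma gauge_e [simp]: "gauge (e a) = 1"
  unfolding gauge_def using f3_e_right[of "e a"] by simp

lemma f3_eq_gauge: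
  assumes "idx a = idx b"
  shows "f3 a b = gauge (mul a b) * unit_inv (gauge a)"
proof -
  have "f3 a b * gauge a = gauge (mul a b)"
    using cond_0ii[of "e a" a b] assms unfolding gauge_def by simp
  then show ?thesis by (metis gauge_invertible mult.assoc mult_1_right unit_inv_right)
qed

lemma f3_iv_right: "f3 a (iv a) = unit_inv (gauge a)"
  using f3_eq_gauge[of a "iv a"] by simp

definition nf1 :: "'x \<Rightarrow> 'x \<Rightarrow> 'r" where
  "nf1 x y = unit_inv (gauge (tr x y)) * f1 x y * gauge x"

definition nf2 :: "'x \<Rightarrow> 'x \<Rightarrow> 'r" where
  "nf2 x y = unit_inv (gauge (tr x y)) * f2 x y * gauge y"

definition nf4 :: "'x \<Rightarrow> 'x \<Rightarrow> 'r" where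
  "nf4 a b = unit_inv (gauge (mul a b)) * f4 a b * gauge b"

definition n\<phi>1 :: "'x \<Rightarrow> 'x \<Rightarrow> 'm" where
  "n\<phi>1 x y = smul (unit_inv (gauge (tr x y))) (\<phi>1 x y)"

definition n\<phi>2 :: "'x \<Rightarrow> 'x \<Rightarrow> 'm" where
  "n\<phi>2 a b = smul (unit_inv (gauge (mul a b))) (\<phi>2 a b)"

lemma f1_e_left_eq_nf1: "f1 (e x) y = nf1 x y"
proof -
  have "f1 x y * gauge x = gauge (tr x y) * f1 (e x) y"
    using cond_4i[of "e x" x y] unfolding gauge_def by simp
  then show ?thesis unfolding nf1_def by (simp add: mult.assoc)
qed

lemma g2_eq_nf2: "f3 (tr x y) (tr (iv x) y) * f2 x y * f3 (e y) y = nf2 x y"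
  by (simp add: nf2_def tr_iv_left f3_iv_right gauge_def)

lemma \<psi>1_eq_n\<phi>1: "smul (f3 (tr x y) (tr (iv x) y)) (\<phi>1 x y) = n\<phi>1 x y"
  by (simp add: n\<phi>1_def tr_iv_left f3_iv_right)

lemma \<psi>2_eq_n\<phi>2:
  "idx a = idx b \<Longrightarrow> smul (f3 (mul a b) (mul (iv b) (iv a))) (\<phi>2 a b) = n\<phi>2 a b"
  by (simp add: n\<phi>2_def iv_mul[symmetric] f3_iv_right)

context
  fixes a b c assumes abc: "idx a = idx b" "idx b = idx c"
begin

lemma norm_0iii: "nf4 a b = nf4 a (mul b c)"
proof -
  have "unit_inv (gauge (mul (mul a b) c)) * (f3 (mul a b) c * f4 a b) * gauge b
      = unit_inv (gauge (mul (mul a b) c)) * (f4 a (mul b c) * f3 b c) * gauge b"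
    using cond_0iii[OF abc] by simp
  then show ?thesis using abc by (simp add: nf4_def f3_eq_gauge mult.assoc mul_assoc)
qed

lemma norm_0iv: "nf4 (mul a b) c = nf4 a (mul b c) * nf4 b c"
  using cond_0iv[OF abc] abc by (simp add: nf4_def mult.assoc mul_assoc)

lemma norm_0phi: "n\<phi>2 a b + n\<phi>2 (mul a b) c = smul (nf4 a (mul b c)) (n\<phi>2 b c) + n\<phi>2 a (mul b c)"
proof -
  have "smul (unit_inv (gauge (mul (mul a b) c))) (smul (f3 (mul a b) c) (\<phi>2 a b) + \<phi>2 (mul a b) c)
      = smul (unit_inv (gauge (mul (mul a b) c))) (smul (f4 a (mul b c)) (\<phi>2 b c) + \<phi>2 a (mul b c))"
    using cond_0phi[OF abc] by simp
  then show ?thesis using abc by (simp add: n\<phi>2_def nf4_def f3_eq_gauge mul_assoc)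
qed

end

context
  fixes a b assumes ab: "idx a = idx b"
begin

lemma norm_1i: "nf1 a b = nf4 (iv b) (mul a b)"
  using cond_1i[OF ab] ab by (simp add: nf1_def nf4_def f3_eq_gauge mult.assoc mul_assoc tr_group)

lemma norm_1ii: "1 + nf4 b (tr a b) * nf2 a b = nf4 a b"
proof -
  have "unit_inv (gauge (mul a b)) * (f3 b (mul (mul (iv b) a) b)
          + f4 b (mul (mul (iv b) a) b) * f2 a b) * gauge b
      = unit_inv (gauge (mul a b)) * f4 a b * gauge b"
    using cond_1ii[OF ab] by simp
  then show ?thesis using ab
    by (simp add: nf2_def nf4_def f3_eq_gauge mult.assoc mul_assoc tr_group distrib_left distrib_right)
qed

lemma norm_1phi: "smul (nf4 b (tr a b)) (n\<phi>1 a b) + n\<phi>2 b (tr a b) = n\<phi>2 a b"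
proof -
  have "smul (unit_inv (gauge (mul a b)))
          (smul (f4 b (mul (mul (iv b) a) b)) (\<phi>1 a b) + \<phi>2 b (mul (mul (iv b) a) b))
      = smul (unit_inv (gauge (mul a b))) (\<phi>2 a b)"
    using cond_1phi[OF ab] by simp
  then show ?thesis using ab by (simp add: n\<phi>1_def n\<phi>2_def nf4_def mul_assoc tr_group)
qed

lemma norm_2ii: "nf1 x (mul a b) = nf1 (tr x a) b * nf1 x a"
  using cond_2ii[OF ab] ab by (simp add: nf1_def mult.assoc tr_mul_right)

lemma norm_2iii: "nf2 x (mul a b) = nf1 (tr x a) b * nf2 x a"
proof -
  have "unit_inv (gauge (tr (tr x a) b)) * (f2 x (mul a b) * f3 a b) * gauge a
      = unit_inv (gauge (tr (tr x a) b)) * (f1 (tr x a) b * f2 x a) * gauge a"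
    using cond_2iii[OF ab] by simp
  then show ?thesis using ab by (simp add: nf1_def nf2_def f3_eq_gauge mult.assoc tr_mul_right)
qed

lemma norm_2phi:
  "smul (nf2 x (mul a b)) (n\<phi>2 a b) + n\<phi>1 x (mul a b) = smul (nf1 (tr x a) b) (n\<phi>1 x a) + n\<phi>1 (tr x a) b"
proof -
  have "smul (unit_inv (gauge (tr (tr x a) b))) (smul (f2 x (mul a b)) (\<phi>2 a b) + \<phi>1 x (mul a b))
      = smul (unit_inv (gauge (tr (tr x a) b))) (smul (f1 (tr x a) b) (\<phi>1 x a) + \<phi>1 (tr x a) b)"
    using cond_2phi[OF ab] by simp
  then show ?thesis using ab by (simp add: nf1_def nf2_def n\<phi>1_def n\<phi>2_def tr_mul_right)
qed

lemma norm_4iii: "nf2 (mul a b) x = nf2 a x + nf4 (tr a x) (tr b x) * nf2 b x"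
proof -
  have "unit_inv (gauge (tr (mul a b) x)) * f2 (mul a b) x * gauge x
      = unit_inv (gauge (tr (mul a b) x))
          * (f3 (tr a x) (tr b x) * f2 a x + f4 (tr a x) (tr b x) * f2 b x) * gauge x"
    using cond_4iii[OF ab] by simp
  then show ?thesis using ab idx_tr_cong[OF ab]
    by (simp add: nf2_def nf4_def f3_eq_gauge mult.assoc tr_mul_left distrib_left distrib_right)
qed

lemma norm_4phi:
  "smul (nf1 (mul a b) x) (n\<phi>2 a b) + n\<phi>1 (mul a b) x
     = n\<phi>1 a x + smul (nf4 (tr a x) (tr b x)) (n\<phi>1 b x) + n\<phi>2 (tr a x) (tr b x)"
proof -
  have "smul (unit_inv (gauge (tr (mul a b) x))) (smul (f1 (mul a b) x) (\<phi>2 a b) + \<phi>1 (mul a b) x)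
      = smul (unit_inv (gauge (tr (mul a b) x)))
          (smul (f3 (tr a x) (tr b x)) (\<phi>1 a x) + smul (f4 (tr a x) (tr b x)) (\<phi>1 b x)
            + \<phi>2 (tr a x) (tr b x))"
    using cond_4phi[OF ab] by simp
  then show ?thesis using ab idx_tr_cong[OF ab]
    by (simp add: nf1_def nf4_def n\<phi>1_def n\<phi>2_def f3_eq_gauge tr_mul_left)
qed

end

lemma norm_2i: "nf1 x (e a) = 1"
  by (simp add: nf1_def cond_2i)

lemma norm_3i: "nf1 (tr x y) z * nf1 x y = nf1 (tr x z) (tr y z) * nf1 x z"
proof -
  have "unit_inv (gauge (tr (tr x y) z)) * (f1 (tr x y) z * f1 x y) * gauge x
      = unit_inv (gauge (tr (tr x y) z)) * (f1 (tr x z) (tr y z) * f1 x z) * gauge x"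
    using cond_3i by simp
  then show ?thesis by (simp add: nf1_def mult.assoc tr_self_distrib[of x y z])
qed

lemma norm_3ii: "nf1 (tr x y) z * nf2 x y = nf2 (tr x z) (tr y z) * nf1 y z"
proof -
  have "unit_inv (gauge (tr (tr x y) z)) * (f1 (tr x y) z * f2 x y) * gauge y
      = unit_inv (gauge (tr (tr x y) z)) * (f2 (tr x z) (tr y z) * f1 y z) * gauge y"
    using cond_3ii by simp
  then show ?thesis by (simp add: nf1_def nf2_def mult.assoc tr_self_distrib[of x y z])
qed

lemma norm_3iii: "nf2 (tr x y) z = nf1 (tr x z) (tr y z) * nf2 x z + nf2 (tr x z) (tr y z) * nf2 y z"
  using cond_3iii[of x y z]
  by (simp add: nf1_def nf2_def mult.assoc distrib_left distrib_right tr_self_distrib[of x y z])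

lemma norm_3phi:
  "smul (nf1 (tr x y) z) (n\<phi>1 x y) + n\<phi>1 (tr x y) z
     = smul (nf1 (tr x z) (tr y z)) (n\<phi>1 x z) + smul (nf2 (tr x z) (tr y z)) (n\<phi>1 y z)
       + n\<phi>1 (tr x z) (tr y z)"
proof -
  have "smul (unit_inv (gauge (tr (tr x y) z))) (smul (f1 (tr x y) z) (\<phi>1 x y) + \<phi>1 (tr x y) z)
      = smul (unit_inv (gauge (tr (tr x y) z)))
          (smul (f1 (tr x z) (tr y z)) (\<phi>1 x z) + smul (f2 (tr x z) (tr y z)) (\<phi>1 y z)
            + \<phi>1 (tr x z) (tr y z))"
    using cond_3phi by simp
  then show ?thesis by (simp add: nf1_def nf2_def n\<phi>1_def tr_self_distrib[of x y z])
qed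

definition kappa :: "'x \<Rightarrow> 'r" where
  "kappa a = nf4 a (e a)"

lemma nf4_eq_kappa:
  assumes "idx a = idx b"
  shows "nf4 a b = kappa a"
  using norm_0iii[of a "e a" b] assms unfolding kappa_def by simp

lemma kappa_mul:
  assumes "idx a = idx b"
  shows "kappa (mul a b) = kappa a * kappa b"
proof -
  have "nf4 (mul a b) (e a) = nf4 a (mul b (e a)) * nf4 b (e a)"
    by (rule norm_0iv) (use assms in simp_all)
  then show ?thesis using assms by (simp add: nf4_eq_kappa)
qed

lemma kappa_invertible: "invertible_elt (kappa a)"
  unfolding kappa_def nf4_def
  by (intro invertible_elt_mult invertible_elt_unit_inv gauge_invertible f4_invertible) simp

lemma kappa_e [simp]: "kappa (e a) = 1"
  using kappa_mul[of "e a" "e a"] by (intro invertible_idempotent_eq_1 kappa_invertible) simp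

lemma kappa_iv_mul_kappa [simp]: "kappa (iv a) * kappa a = 1"
  using kappa_mul[of "iv a" a] by simp

lemma nf1_eq_kappa_iv:
  assumes "idx a = idx b"
  shows "nf1 a b = kappa (iv b)"
  using norm_1i[OF assms] nf4_eq_kappa[of "iv b" "mul a b"] assms by simp

lemma mcq_alexander_pair_nf: "mcq_alexander_pair idx mul e iv tr nf1 nf2"
  unfolding mcq_alexander_pair_def
proof (intro conjI allI impI)
  fix a b assume ab: "idx a = idx b"
  have "nf4 b (tr a b) = kappa b" by (rule nf4_eq_kappa) (use ab in \<open>simp add: tr_group\<close>)
  then have "1 + kappa b * nf2 a b = kappa a"
    using norm_1ii[OF ab] nf4_eq_kappa[OF ab] by simp
  then have "kappa (iv b) * (1 + kappa b * nf2 a b) = kappa (iv b) * kappa a" by simp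
  then have "kappa (iv b) + nf2 a b = kappa (iv b) * kappa a"
    by (simp add: distrib_left mult.assoc[symmetric])
  moreover have "nf1 a (mul (iv a) b) = kappa (iv (mul (iv a) b))"
    by (rule nf1_eq_kappa_iv) (use ab in simp)
  moreover have "kappa (iv (mul (iv a) b)) = kappa (iv b) * kappa a"
    using ab by (simp add: iv_mul kappa_mul)
  ultimately show "nf1 a b + nf2 a b = nf1 a (mul (iv a) b)"
    using nf1_eq_kappa_iv[OF ab] by simp
next
  fix a b x assume ab: "idx a = idx b"
  show "nf1 a x = nf1 b x"
    using e_cong[OF ab] by (simp flip: f1_e_left_eq_nf1)
  have "nf1 (tr b x) (tr (iv a) x) = kappa (tr a x)"
    using nf1_eq_kappa_iv[of "tr b x" "tr (iv a) x"] idx_tr_cong[OF ab] by (simp add: tr_iv_left)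
  moreover have "nf4 (tr a x) (tr b x) = kappa (tr a x)"
    using idx_tr_cong[OF ab] by (rule nf4_eq_kappa)
  ultimately show "nf2 (mul a b) x = nf2 a x + nf1 (tr b x) (tr (iv a) x) * nf2 b x"
    using norm_4iii[OF ab] by simp
qed (rule norm_2i norm_2ii norm_2iii norm_3i norm_3ii norm_3iii | assumption)+

text \<open>\<open>\<psi>\<^sub>2\<close> need only agree with \<open>n\<phi>2\<close> on pairs from a common group, the only pairs
  on which a twisted 2-cocycle is evaluated.\<close>

lemma twisted_2_cocycle_nf:
  assumes \<psi>2: "\<And>a b. idx a = idx b \<Longrightarrow> \<psi>2 a b = n\<phi>2 a b"
  shows "twisted_2_cocycle idx mul e iv tr smul nf1 nf2 n\<phi>1 \<psi>2"
  unfolding twisted_2_cocycle_def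
proof (intro conjI allI impI)
  fix a b c assume "idx a = idx b \<and> idx b = idx c"
  then have ab: "idx a = idx b" and bc: "idx b = idx c" by auto
  have "nf1 a (iv a) = nf4 a (mul b c)"
    using ab bc nf1_eq_kappa_iv[of a "iv a"] nf4_eq_kappa[of a "mul b c"] by simp
  then show "\<psi>2 a b + \<psi>2 (mul a b) c = smul (nf1 a (iv a)) (\<psi>2 b c) + \<psi>2 a (mul b c)"
    using norm_0phi[OF ab bc] ab bc by (simp add: \<psi>2)
next
  fix a b assume ab: "idx a = idx b"
  have "nf1 b (iv b) = nf4 b (tr a b)"
    using ab nf1_eq_kappa_iv[of b "iv b"] nf4_eq_kappa[of b "tr a b"] by (simp add: tr_group)
  then show "smul (nf1 b (iv b)) (n\<phi>1 a b) + \<psi>2 b (mul (mul (iv b) a) b) = \<psi>2 a b"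
    using norm_1phi[OF ab] ab by (simp add: \<psi>2 tr_group)
next
  fix x a b assume ab: "idx a = idx b"
  show "smul (nf2 x (mul a b)) (\<psi>2 a b) + n\<phi>1 x (mul a b)
          = smul (nf1 (tr x a) b) (n\<phi>1 x a) + n\<phi>1 (tr x a) b"
    using norm_2phi[OF ab] ab by (simp add: \<psi>2)
next
  fix a b x assume ab: "idx a = idx b"
  have "nf1 (tr a x) (tr (iv a) x) = nf4 (tr a x) (tr b x)"
    using idx_tr_cong[OF ab] nf1_eq_kappa_iv[of "tr a x" "tr (iv a) x"]
      nf4_eq_kappa[of "tr a x" "tr b x"]
    by (simp add: tr_iv_left)
  then show "smul (nf1 (mul a b) x) (\<psi>2 a b) + n\<phi>1 (mul a b) x
      = n\<phi>1 a x + smul (nf1 (tr a x) (tr (iv a) x)) (n\<phi>1 b x) + \<psi>2 (tr a x) (tr b x)"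
    using norm_4phi[OF ab] ab idx_tr_cong[OF ab] by (simp add: \<psi>2)
qed (rule norm_3phi)

end

theorem lemma4p2:
  fixes idx :: "'x \<Rightarrow> 'l" and mul :: "'x \<Rightarrow> 'x \<Rightarrow> 'x" and e iv :: "'x \<Rightarrow> 'x"
    and tr :: "'x \<Rightarrow> 'x \<Rightarrow> 'x"
    and smul :: "'r::ring_1 \<Rightarrow> 'm::ab_group_add \<Rightarrow> 'm"
    and f1 f2 f3 f4 :: "'x \<Rightarrow> 'x \<Rightarrow> 'r" and \<phi>1 \<phi>2 :: "'x \<Rightarrow> 'x \<Rightarrow> 'm"
  assumes "mcq idx mul e iv tr"
    and "left_module smul"
    and "six_tuple_conditions idx mul e iv tr smul f1 f2 f3 f4 \<phi>1 \<phi>2"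
  shows "augmented_mcq_alexander_pair idx mul e iv tr smul
           (\<lambda>x y. f1 (e x) y)
           (\<lambda>x y. f3 (tr x y) (tr (iv x) y) * f2 x y * f3 (e y) y)
           (\<lambda>x y. smul (f3 (tr x y) (tr (iv x) y)) (\<phi>1 x y))
           (\<lambda>a b. smul (f3 (mul a b) (mul (iv b) (iv a))) (\<phi>2 a b))"
proof -
  interpret six_tuple idx mul e iv tr smul f1 f2 f3 f4 \<phi>1 \<phi>2
    using assms by unfold_locales
  have "(\<lambda>x y. f1 (e x) y) = nf1"
    by (intro ext) (rule f1_e_left_eq_nf1)
  moreover have "(\<lambda>x y. f3 (tr x y) (tr (iv x) y) * f2 x y * f3 (e y) y) = nf2"
    by (intro ext) (rule g2_eq_nf2)
  moreover have "(\<lambda>x y. smul (f3 (tr x y) (tr (iv x) y)) (\<phi>1 x y)) = n\<phi>1"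
    by (intro ext) (rule \<psi>1_eq_n\<phi>1)
  ultimately show ?thesis
    unfolding augmented_mcq_alexander_pair_def
    using mcq_alexander_pair_nf twisted_2_cocycle_nf[OF \<psi>2_eq_n\<phi>2] by simp
qed

end
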